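(* Let $\lambda=0$ and let $y_1,y_2\in\mathbb{R}^k$. For $i\in\{1,2\}$ with $\mathbb{P}(r(y_1,y_2)=i)>0$ let $y_i^*\in\operatorname*{argmax}_{y\in\mathcal{Y}}\mathbb{E}[g(y)\mid r(y_1,y_2)=i]$ (and if $\mathbb{P}(r(y_1,y_2)=i)=0$ let $y_i^*\in\mathcal{Y}$ be arbitrary). Then $$\mathrm{EUBO}(y_1^*,y_2^* )\;\ge\;W_0(y_1,y_2).$$
   Context: Let $\mathcal{Y}\subseteq\mathbb{R}^k$ be compact. Let $g$ be a random function on $\mathbb{R}^k$ distributed as a Gaussian process with continuous mean and covariance; all probabilities and expectations are with respect to the law of $g$. For a query $(y_1,y_2)\in\mathbb{R}^k\times\mathbb{R}^k$ the noiseless ($\lambda=0$) response is $r(y_1,y_2)=1$ if $g(y_1)>g(y_2)$ and $r(y_1,y_2)=2$ if $g(y_1)<g(y_2)$ (ties broken arbitrarily). $\mathrm{EUBO}(y_1,y_2)=\mathbb{E}[\max\{g(y_1),g(y_2)\}]$, and $$W_0(y_1,y_2)=\sum_{i\in\{1,2\}:\,\mathbb{P}(r(y_1,y_2)=i)>0}\mathbb{P}(r(y_1,y_2)=i)\max_{y\in\mathcal{Y}}\mathbb{E}[g(y)\mid r(y_1,y_2)=i],$$ where these maxima are assumed attained. *)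

theory Defs
  imports "HOL-Probability.Probability"
begin

definition gaussian_rv :: "'w measure \<Rightarrow> ('w \<Rightarrow> real) \<Rightarrow> bool" where
  "gaussian_rv M X \<longleftrightarrow> X \<in> borel_measurable M \<and>
     ((\<exists>c. AE \<omega> in M. X \<omega> = c) \<or>
      (\<exists>\<mu> \<sigma>. \<sigma> > 0 \<and> distributed M lborel X (normal_density \<mu> \<sigma>)))"

text \<open>Gaussian process: every finite-dimensional marginal is multivariate normal,
  i.e. every finite linear combination of its values is (univariate) Gaussian.\<close>
definition gaussian_process :: "'w measure \<Rightarrow> ('w \<Rightarrow> 'a \<Rightarrow> real) \<Rightarrow> bool" where
  "gaussian_process M g \<longleftrightarrow>
     (\<forall>x. (\<lambda>\<omega>. g \<omega> x) \<in> borel_measurable M) \<and>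
     (\<forall>xs cs. length xs = length cs \<longrightarrow>
        gaussian_rv M (\<lambda>\<omega>. \<Sum>i<length xs. cs ! i * g \<omega> (xs ! i)))"

definition gp_mean :: "'w measure \<Rightarrow> ('w \<Rightarrow> 'a \<Rightarrow> real) \<Rightarrow> 'a \<Rightarrow> real" where
  "gp_mean M g x = (\<integral>\<omega>. g \<omega> x \<partial>M)"

definition gp_cov :: "'w measure \<Rightarrow> ('w \<Rightarrow> 'a \<Rightarrow> real) \<Rightarrow> 'a \<Rightarrow> 'a \<Rightarrow> real" where
  "gp_cov M g x y = (\<integral>\<omega>. (g \<omega> x - gp_mean M g x) * (g \<omega> y - gp_mean M g y) \<partial>M)"

definition cond_exp_event :: "'w measure \<Rightarrow> ('w \<Rightarrow> real) \<Rightarrow> 'w set \<Rightarrow> real" where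
  "cond_exp_event M X A = (\<integral>\<omega>. indicator A \<omega> * X \<omega> \<partial>M) / measure M A"

definition resp_event :: "'w measure \<Rightarrow> ('w \<Rightarrow> nat) \<Rightarrow> nat \<Rightarrow> 'w set" where
  "resp_event M r i = {\<omega> \<in> space M. r \<omega> = i}"

definition EUBO :: "'w measure \<Rightarrow> ('w \<Rightarrow> 'a \<Rightarrow> real) \<Rightarrow> 'a \<Rightarrow> 'a \<Rightarrow> real" where
  "EUBO M g y1 y2 = (\<integral>\<omega>. max (g \<omega> y1) (g \<omega> y2) \<partial>M)"

text \<open>W_0 for the query whose (noiseless) response random variable is r;
  the maximum over Y is written as a supremum (it is assumed attained).\<close>
definition W0 :: "'w measure \<Rightarrow> ('w \<Rightarrow> 'a \<Rightarrow> real) \<Rightarrow> ('w \<Rightarrow> nat) \<Rightarrow> 'a set \<Rightarrow> real" where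
  "W0 M g r Y = (\<Sum>i\<in>{i\<in>{1,2}. measure M (resp_event M r i) > 0}.
      measure M (resp_event M r i) *
      (SUP y\<in>Y. cond_exp_event M (\<lambda>\<omega>. g \<omega> y) (resp_event M r i)))"

end

theory Submission
  imports Defs
begin

text \<open>Since the response takes only the values 1 and 2, the events \<open>r = 1\<close> and \<open>r = 2\<close>
  partition the sample space. If \<open>y\<^sub>i\<^sup>*\<close> attains the maximum of the conditional mean on the
  event \<open>r = i\<close>, the \<open>i\<close>-th summand of \<open>W\<^sub>0\<close> is \<open>\<integral>\<^bsub>r = i\<^esub> g(y\<^sub>i\<^sup>*)\<close>, so
  \<open>W\<^sub>0 = \<integral> (1\<^bsub>r = 1\<^esub> g(y\<^sub>1\<^sup>*) + 1\<^bsub>r = 2\<^esub> g(y\<^sub>2\<^sup>*))\<close>, and the integrand is pointwise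
  at most \<open>max (g(y\<^sub>1\<^sup>*)) (g(y\<^sub>2\<^sup>*))\<close>.\<close>

lemma gaussian_rv_integrable:
  assumes "prob_space M" and "gaussian_rv M X"
  shows "integrable M X"
proof -
  have X: "X \<in> borel_measurable M" using assms(2) by (simp add: gaussian_rv_def)
  from assms(2) consider (degenerate) c where "AE \<omega> in M. X \<omega> = c"
    | (normal) \<mu> \<sigma> where "\<sigma> > 0" "distributed M lborel X (normal_density \<mu> \<sigma>)"
    unfolding gaussian_rv_def by blast
  then show ?thesis
  proof cases
    case degenerate
    have "integrable M (\<lambda>_. c)"
      using assms(1) by (simp add: prob_space.finite_measure finite_measure.integrable_const)
    then show ?thesis using integrable_cong_AE[OF X _ degenerate] by simp
  next
    case normal
    then show ?thesis
      using distributed_integrable_var[OF normal(2) normal_density_nonneg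
          integrable_normal_moment_nz_1] by simp
  qed
qed

lemma gaussian_process_integrable:
  assumes "prob_space M" and "gaussian_process M g"
  shows "integrable M (\<lambda>\<omega>. g \<omega> y)"
proof -
  have "gaussian_rv M (\<lambda>\<omega>. \<Sum>i<length [y]. [1::real] ! i * g \<omega> ([y] ! i))"
    using assms(2) unfolding gaussian_process_def
    by (elim conjE allE[of _ "[y]"] allE[of _ "[1]"]) simp
  then show ?thesis using gaussian_rv_integrable[OF assms(1)] by simp
qed

lemma resp_event_sets:
  assumes "r \<in> measurable M (count_space UNIV)"
  shows "resp_event M r i \<in> sets M"
proof -
  have "resp_event M r i = r -` {i} \<inter> space M" by (auto simp: resp_event_def)
  then show ?thesis using measurable_sets[OF assms, of "{i}"] by simp
qed

text \<open>For an event of probability zero both sides vanish; this is why \<open>W\<^sub>0\<close> may drop such events.\<close>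
lemma weighted_max_cond_exp_event_eq_integral:
  assumes "finite_measure M" and "A \<in> sets M" and "z \<in> Y"
    and "measure M A > 0 \<longrightarrow>
           (\<forall>y\<in>Y. cond_exp_event M (X y) A \<le> cond_exp_event M (X z) A)"
  shows "(if measure M A > 0 then measure M A * (SUP y\<in>Y. cond_exp_event M (X y) A) else 0)
           = (\<integral>\<omega>. indicator A \<omega> * X z \<omega> \<partial>M)"
proof (cases "measure M A > 0")
  case True
  have "(SUP y\<in>Y. cond_exp_event M (X y) A) = cond_exp_event M (X z) A"
    by (rule cSup_eq_maximum) (use assms True in auto)
  then show ?thesis using True by (simp add: cond_exp_event_def)
next
  case False
  then have "A \<in> null_sets M"
    using assms(1,2) measure_nonneg[of M A]
    by (simp add: finite_measure.emeasure_eq_measure null_sets_def)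
  then have "AE \<omega> in M. indicator A \<omega> * X z \<omega> = 0"
    by (rule AE_mp[OF AE_not_in]) simp
  then show ?thesis using False by (simp add: integral_eq_zero_AE)
qed

lemma W0_eq_sum_integrals:
  assumes "finite_measure M" and "r \<in> measurable M (count_space UNIV)"
    and "ys1 \<in> Y" and "ys2 \<in> Y"
    and "measure M (resp_event M r 1) > 0 \<longrightarrow>
           (\<forall>y\<in>Y. cond_exp_event M (\<lambda>\<omega>. g \<omega> y) (resp_event M r 1)
                   \<le> cond_exp_event M (\<lambda>\<omega>. g \<omega> ys1) (resp_event M r 1))"
    and "measure M (resp_event M r 2) > 0 \<longrightarrow>
           (\<forall>y\<in>Y. cond_exp_event M (\<lambda>\<omega>. g \<omega> y) (resp_event M r 2)
                   \<le> cond_exp_event M (\<lambda>\<omega>. g \<omega> ys2) (resp_event M r 2))"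
  shows "W0 M g r Y = (\<integral>\<omega>. indicator (resp_event M r 1) \<omega> * g \<omega> ys1 \<partial>M)
                    + (\<integral>\<omega>. indicator (resp_event M r 2) \<omega> * g \<omega> ys2 \<partial>M)"
proof -
  let ?A = "resp_event M r"
  let ?term = "\<lambda>i. if measure M (?A i) > 0
                 then measure M (?A i) * (SUP y\<in>Y. cond_exp_event M (\<lambda>\<omega>. g \<omega> y) (?A i)) else 0"
  have "W0 M g r Y = (\<Sum>i\<in>{1::nat, 2}. ?term i)"
    unfolding W0_def by (rule sum.inter_filter) simp
  also have "\<dots> = ?term 1 + ?term 2" by simp
  also have "\<dots> = (\<integral>\<omega>. indicator (?A 1) \<omega> * g \<omega> ys1 \<partial>M)
                  + (\<integral>\<omega>. indicator (?A 2) \<omega> * g \<omega> ys2 \<partial>M)"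
    by (intro arg_cong2[where f = "(+)"]
        weighted_max_cond_exp_event_eq_integral[OF assms(1) resp_event_sets[OF assms(2)]]
        assms(3-6))
  finally show ?thesis .
qed

lemma integral_split_by_response_le_max:
  fixes f h :: "'w \<Rightarrow> real"
  assumes "integrable M f" and "integrable M h"
    and "r \<in> measurable M (count_space UNIV)"
    and "\<forall>\<omega>\<in>space M. r \<omega> \<in> {1, 2}"
  shows "(\<integral>\<omega>. indicator (resp_event M r 1) \<omega> * f \<omega> \<partial>M)
           + (\<integral>\<omega>. indicator (resp_event M r 2) \<omega> * h \<omega> \<partial>M)
         \<le> (\<integral>\<omega>. max (f \<omega>) (h \<omega>) \<partial>M)"
proof -
  have int: "integrable M (\<lambda>\<omega>. indicator (resp_event M r i) \<omega> * k \<omega>)"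
    if "integrable M k" for i and k :: "'w \<Rightarrow> real"
    using integrable_real_mult_indicator[OF resp_event_sets[OF assms(3)] that]
    by (simp add: mult.commute)
  have "(\<integral>\<omega>. indicator (resp_event M r 1) \<omega> * f \<omega> \<partial>M)
          + (\<integral>\<omega>. indicator (resp_event M r 2) \<omega> * h \<omega> \<partial>M)
        = (\<integral>\<omega>. indicator (resp_event M r 1) \<omega> * f \<omega>
                + indicator (resp_event M r 2) \<omega> * h \<omega> \<partial>M)"
    using int assms(1,2) by (simp add: Bochner_Integration.integral_add)
  also have "\<dots> \<le> (\<integral>\<omega>. max (f \<omega>) (h \<omega>) \<partial>M)"
  proof (rule integral_mono)
    show "integrable M (\<lambda>\<omega>. indicator (resp_event M r 1) \<omega> * f \<omega>
                              + indicator (resp_event M r 2) \<omega> * h \<omega>)"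
      using int assms(1,2) by (intro Bochner_Integration.integrable_add)
    show "integrable M (\<lambda>\<omega>. max (f \<omega>) (h \<omega>))"
      using assms(1,2) by (rule integrable_max)
    fix \<omega> assume "\<omega> \<in> space M"
    then show "indicator (resp_event M r 1) \<omega> * f \<omega> + indicator (resp_event M r 2) \<omega> * h \<omega>
                 \<le> max (f \<omega>) (h \<omega>)"
      using assms(4) by (auto simp: resp_event_def)
  qed
  finally show ?thesis .
qed

theorem mainTheorem6:
  fixes M :: "'w measure"
    and g :: "'w \<Rightarrow> real ^ 'k \<Rightarrow> real"
    and Y :: "(real ^ 'k) set"
    and y1 y2 ys1 ys2 :: "real ^ 'k"
    and r :: "'w \<Rightarrow> nat"
  assumes "prob_space M"
    and "compact Y"
    and "gaussian_process M g"
    and "continuous_on UNIV (gp_mean M g)"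
    and "continuous_on UNIV (\<lambda>(x, y). gp_cov M g x y)"
    and "r \<in> measurable M (count_space UNIV)"
    and "\<forall>\<omega>\<in>space M. r \<omega> \<in> {1, 2}
           \<and> (g \<omega> y1 > g \<omega> y2 \<longrightarrow> r \<omega> = 1)
           \<and> (g \<omega> y1 < g \<omega> y2 \<longrightarrow> r \<omega> = 2)"
    and "ys1 \<in> Y" and "ys2 \<in> Y"
    and "measure M (resp_event M r 1) > 0 \<longrightarrow>
           (\<forall>y\<in>Y. cond_exp_event M (\<lambda>\<omega>. g \<omega> y) (resp_event M r 1)
                   \<le> cond_exp_event M (\<lambda>\<omega>. g \<omega> ys1) (resp_event M r 1))"
    and "measure M (resp_event M r 2) > 0 \<longrightarrow>
           (\<forall>y\<in>Y. cond_exp_event M (\<lambda>\<omega>. g \<omega> y) (resp_event M r 2)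
                   \<le> cond_exp_event M (\<lambda>\<omega>. g \<omega> ys2) (resp_event M r 2))"
  shows "EUBO M g ys1 ys2 \<ge> W0 M g r Y"
proof -
  have "W0 M g r Y = (\<integral>\<omega>. indicator (resp_event M r 1) \<omega> * g \<omega> ys1 \<partial>M)
                   + (\<integral>\<omega>. indicator (resp_event M r 2) \<omega> * g \<omega> ys2 \<partial>M)"
    using prob_space.finite_measure[OF assms(1)] assms(6,8-11) by (rule W0_eq_sum_integrals)
  also have "\<dots> \<le> EUBO M g ys1 ys2"
    unfolding EUBO_def
    using gaussian_process_integrable[OF assms(1,3)] assms(6,7)
    by (intro integral_split_by_response_le_max) auto
  finally show ?thesis .
qed

end
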